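(* Let $d\ge1$. Every $(d+1)$-lateration graph can be obtained from a complete graph by a finite (possibly empty) sequence of edge-reduced graph attachments.
   Context: A graph $G=(V,E)$ with $V=\{1,\dots,v\}$ is a $(d+1)$-lateration graph if the vertices $1,\dots,d+1$ form a complete graph, and each vertex $i>d+1$ is joined to exactly $d+1$ vertices of $\{1,\dots,i-1\}$ (these being all the edges). Given graphs $G_A=(V_A,E_A)$, $G_B=(V_B,E_B)$ with $V_C=V_A\cap V_B$ nonempty and a proper subset of both $V_A$ and $V_B$, their graph attachment is $(V_A\cup V_B,E_A\cup E_B)$, and their edge-reduced graph attachment is obtained from it by removing the edges $\{i,j\}$ with $i,j\in V_C$ that belong to one of the two graphs ($G_B$, say) but not to the other ($G_A$). *)

theory Defs
  imports Main
begin

text \<open>A (simple, undirected) graph is a pair (V, E) of a vertex set and a set of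
edges, each edge being a 2-element subset of V.\<close>

type_synonym 'a graph = "'a set \<times> 'a set set"

definition complete_edges :: "'a set \<Rightarrow> 'a set set" where
  "complete_edges V = {e. e \<subseteq> V \<and> card e = 2}"

definition complete_graph :: "'a set \<Rightarrow> 'a graph" where
  "complete_graph V = (V, complete_edges V)"

definition lateration_graph :: "nat \<Rightarrow> nat graph \<Rightarrow> bool" where
  "lateration_graph d G \<longleftrightarrow>
     (\<exists>v. fst G = {1..v} \<and> d + 1 \<le> v \<and>
        snd G \<subseteq> complete_edges (fst G) \<and>
        (\<forall>i j. 1 \<le> i \<and> i < j \<and> j \<le> d + 1 \<longrightarrow> {i, j} \<in> snd G) \<and>
        (\<forall>i. d + 1 < i \<and> i \<le> v \<longrightarrow> card {j \<in> {1..<i}. {j, i} \<in> snd G} = d + 1))"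

definition attachable :: "'a graph \<Rightarrow> 'a graph \<Rightarrow> bool" where
  "attachable GA GB \<longleftrightarrow>
     fst GA \<inter> fst GB \<noteq> {} \<and> fst GA \<inter> fst GB \<subset> fst GA \<and> fst GA \<inter> fst GB \<subset> fst GB"

definition edge_reduced_attach :: "'a graph \<Rightarrow> 'a graph \<Rightarrow> 'a graph" where
  "edge_reduced_attach GA GB =
     (fst GA \<union> fst GB,
      (snd GA \<union> snd GB) - {e. e \<subseteq> fst GA \<inter> fst GB \<and> e \<in> snd GB \<and> e \<notin> snd GA})"

inductive obtainable_by_era :: "'a graph \<Rightarrow> bool" where
  base: "finite V \<Longrightarrow> V \<noteq> {} \<Longrightarrow> obtainable_by_era (complete_graph V)"
| step: "obtainable_by_era GA \<Longrightarrow> finite VB \<Longrightarrow> attachable GA (complete_graph VB) \<Longrightarrow>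
         obtainable_by_era (edge_reduced_attach GA (complete_graph VB))"

end

theory Submission
  imports Defs
begin

text \<open>Deleting the last vertex \<open>v > d + 1\<close> of a lateration graph on \<open>{1..v}\<close> leaves a
lateration graph on \<open>{1..v-1}\<close>. Conversely, the graph is recovered by the edge-reduced attachment
of the complete graph on \<open>v\<close> together with its \<open>d + 1\<close> neighbours: the attachment adds all
edges at \<open>v\<close>, and the edges it would add inside the neighbourhood are exactly the ones removed
again by the edge reduction. This needs the neighbourhood to be a proper subset of \<open>{1..v-1}\<close>;
otherwise \<open>v = d + 2\<close> and the graph is complete. Induction on \<open>v\<close> ends at the complete graph
on \<open>{1..d+1}\<close>.\<close>

definition delete_vertex :: "'a \<Rightarrow> 'a graph \<Rightarrow> 'a graph" where
  "delete_vertex x G = (fst G - {x}, {e \<in> snd G. x \<notin> e})"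

definition neighbours :: "'a graph \<Rightarrow> 'a \<Rightarrow> 'a set" where
  "neighbours G x = {y. {y, x} \<in> snd G}"

lemma complete_edges_iff:
  "e \<in> complete_edges V \<longleftrightarrow> (\<exists>a b. a \<in> V \<and> b \<in> V \<and> a \<noteq> b \<and> e = {a, b})"
  by (auto simp: complete_edges_def card_2_iff)

lemma graph_eq_complete_graphI:
  assumes "snd G \<subseteq> complete_edges (fst G)"
    and "\<And>a b. a \<in> fst G \<Longrightarrow> b \<in> fst G \<Longrightarrow> a \<noteq> b \<Longrightarrow> {a, b} \<in> snd G"
  shows "G = complete_graph (fst G)"
proof -
  have "snd G = complete_edges (fst G)"
    using assms by (auto simp: complete_edges_iff)
  then show ?thesis
    by (simp add: complete_graph_def prod_eq_iff)
qed

lemma neighbours_subset: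
  assumes "snd G \<subseteq> complete_edges (fst G)"
  shows "neighbours G x \<subseteq> fst G - {x}"
  using assms by (auto simp: neighbours_def complete_edges_def)

lemma complete_graph_if_delete_vertex_complete:
  assumes "snd G \<subseteq> complete_edges (fst G)"
    and "delete_vertex x G = complete_graph (fst G - {x})"
    and "neighbours G x = fst G - {x}"
  shows "G = complete_graph (fst G)"
proof (rule graph_eq_complete_graphI[OF assms(1)])
  fix a b assume ab: "a \<in> fst G" "b \<in> fst G" "a \<noteq> b"
  have edges_off_x: "{e \<in> snd G. x \<notin> e} = complete_edges (fst G - {x})"
    using assms(2) by (simp add: delete_vertex_def complete_graph_def)
  consider "a = x" | "b = x" | "a \<noteq> x" "b \<noteq> x" by blast
  then show "{a, b} \<in> snd G"
  proof cases
    case 1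
    then show ?thesis using ab assms(3) by (auto simp: neighbours_def insert_commute)
  next
    case 2
    then show ?thesis using ab assms(3) by (auto simp: neighbours_def)
  next
    case 3
    then have "{a, b} \<in> complete_edges (fst G - {x})"
      using ab by (auto simp: complete_edges_iff)
    then show ?thesis using edges_off_x by blast
  qed
qed

lemma edge_reduced_attach_neighbourhood:
  assumes edges: "snd G \<subseteq> complete_edges (fst G)" and x: "x \<in> fst G"
  shows "edge_reduced_attach (delete_vertex x G) (complete_graph (insert x (neighbours G x))) = G"
proof -
  let ?N = "neighbours G x"
  have N: "?N \<subseteq> fst G - {x}"
    using neighbours_subset[OF edges] .
  have common: "fst (delete_vertex x G) \<inter> insert x ?N = ?N"
    using N by (auto simp: delete_vertex_def)
  have "(snd (delete_vertex x G) \<union> complete_edges (insert x ?N))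
          - {e. e \<subseteq> ?N \<and> e \<in> complete_edges (insert x ?N) \<and> e \<notin> snd (delete_vertex x G)}
        = snd G"
  proof (intro equalityI subsetI)
    fix e assume "e \<in> (snd (delete_vertex x G) \<union> complete_edges (insert x ?N))
          - {e. e \<subseteq> ?N \<and> e \<in> complete_edges (insert x ?N) \<and> e \<notin> snd (delete_vertex x G)}"
    then show "e \<in> snd G"
      using N by (auto simp: delete_vertex_def complete_edges_iff neighbours_def insert_commute)
  next
    fix e assume e: "e \<in> snd G"
    then have "e \<in> complete_edges (fst G)"
      using edges by blast
    then obtain a b where ab: "a \<in> fst G" "b \<in> fst G" "a \<noteq> b" "e = {a, b}"
      unfolding complete_edges_iff by blast
    show "e \<in> (snd (delete_vertex x G) \<union> complete_edges (insert x ?N))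
          - {e. e \<subseteq> ?N \<and> e \<in> complete_edges (insert x ?N) \<and> e \<notin> snd (delete_vertex x G)}"
    proof (cases "x \<in> e")
      case True
      then obtain y where y: "e = {y, x}" "y \<noteq> x"
        using ab by (auto simp: insert_commute)
      then have "y \<in> ?N"
        using e by (simp add: neighbours_def)
      then have "e \<in> complete_edges (insert x ?N)"
        unfolding complete_edges_iff using y by blast
      moreover have "\<not> e \<subseteq> ?N"
        using N y by blast
      ultimately show ?thesis by blast
    next
      case False
      then show ?thesis using e by (simp add: delete_vertex_def)
    qed
  qed
  moreover have "fst (delete_vertex x G) \<union> insert x ?N = fst G"
    using N x by (auto simp: delete_vertex_def)
  ultimately show ?thesis
    unfolding edge_reduced_attach_def complete_graph_def fst_conv snd_conv common
    by (simp add: prod_eq_iff)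
qed

lemma obtainable_by_era_reattach_vertex:
  assumes "obtainable_by_era (delete_vertex x G)"
    and "finite (fst G)" "snd G \<subseteq> complete_edges (fst G)" "x \<in> fst G"
    and "neighbours G x \<noteq> {}" "neighbours G x \<noteq> fst G - {x}"
  shows "obtainable_by_era G"
proof -
  let ?N = "neighbours G x"
  have N: "?N \<subseteq> fst G - {x}"
    using neighbours_subset[OF assms(3)] .
  have "attachable (delete_vertex x G) (complete_graph (insert x ?N))"
    using N assms(5,6) by (auto simp: attachable_def delete_vertex_def complete_graph_def)
  moreover have "finite (insert x ?N)"
    using N assms(2) finite_subset by blast
  ultimately have "obtainable_by_era
      (edge_reduced_attach (delete_vertex x G) (complete_graph (insert x ?N)))"
    using obtainable_by_era.step[OF assms(1)] by blast
  then show ?thesis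
    using edge_reduced_attach_neighbourhood[OF assms(3,4)] by simp
qed

definition lateration_graph_on :: "nat \<Rightarrow> nat \<Rightarrow> nat graph \<Rightarrow> bool" where
  "lateration_graph_on d v G \<longleftrightarrow> fst G = {1..v} \<and> d + 1 \<le> v \<and>
        snd G \<subseteq> complete_edges (fst G) \<and>
        (\<forall>i j. 1 \<le> i \<and> i < j \<and> j \<le> d + 1 \<longrightarrow> {i, j} \<in> snd G) \<and>
        (\<forall>i. d + 1 < i \<and> i \<le> v \<longrightarrow> card {j \<in> {1..<i}. {j, i} \<in> snd G} = d + 1)"

lemma lateration_graph_iff: "lateration_graph d G \<longleftrightarrow> (\<exists>v. lateration_graph_on d v G)"
  by (simp add: lateration_graph_def lateration_graph_on_def)

lemma lateration_graph_on_eq_complete_graph: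
  assumes "lateration_graph_on d (d + 1) G"
  shows "G = complete_graph {1..d + 1}"
proof -
  have "G = complete_graph (fst G)"
  proof (rule graph_eq_complete_graphI)
    fix a b assume "a \<in> fst G" "b \<in> fst G" "a \<noteq> b"
    then show "{a, b} \<in> snd G"
      using assms unfolding lateration_graph_on_def
      by (cases "a < b") (auto simp: insert_commute dest: spec[of _ a] spec[of _ b])
  qed (use assms in \<open>auto simp: lateration_graph_on_def\<close>)
  then show ?thesis
    using assms by (simp add: lateration_graph_on_def)
qed

lemma lateration_graph_on_delete_last:
  assumes "lateration_graph_on d (Suc w) G" "d + 1 < Suc w"
  shows "lateration_graph_on d w (delete_vertex (Suc w) G)"
proof -
  have "{j \<in> {1..<i}. {j, i} \<in> snd (delete_vertex (Suc w) G)} = {j \<in> {1..<i}. {j, i} \<in> snd G}"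
    if "i \<le> w" for i
    using that by (auto simp: delete_vertex_def)
  moreover have "fst G - {Suc w} = {1..w}"
    using assms(1) by (auto simp: lateration_graph_on_def)
  moreover have "{e \<in> snd G. Suc w \<notin> e} \<subseteq> complete_edges (fst G - {Suc w})"
    using assms(1) by (auto simp: lateration_graph_on_def complete_edges_def)
  ultimately show ?thesis
    using assms unfolding lateration_graph_on_def delete_vertex_def by auto
qed

lemma lateration_graph_on_neighbours_last:
  assumes "lateration_graph_on d v G" "d + 1 < v"
  shows "card (neighbours G v) = d + 1"
proof -
  have "neighbours G v \<subseteq> {1..<v}"
    using assms(1) neighbours_subset[of G v] by (force simp: lateration_graph_on_def)
  then have "neighbours G v = {j \<in> {1..<v}. {j, v} \<in> snd G}"
    by (auto simp: neighbours_def)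
  then show ?thesis
    using assms by (simp add: lateration_graph_on_def)
qed

lemma lateration_graph_on_obtainable_by_era:
  "lateration_graph_on d v G \<Longrightarrow> obtainable_by_era G"
proof (induction v arbitrary: G)
  case 0
  then show ?case by (simp add: lateration_graph_on_def)
next
  case (Suc w)
  note lat = Suc.prems
  have V: "fst G = {1..Suc w}" and edges: "snd G \<subseteq> complete_edges (fst G)"
    using lat unfolding lateration_graph_on_def by blast+
  show ?case
  proof (cases "Suc w = d + 1")
    case True
    then have "G = complete_graph {1..d + 1}"
      using lat lateration_graph_on_eq_complete_graph by simp
    then show ?thesis
      by (simp add: obtainable_by_era.base)
  next
    case False
    then have last: "d + 1 < Suc w"
      using lat by (simp add: lateration_graph_on_def)
    have lat': "lateration_graph_on d w (delete_vertex (Suc w) G)"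
      using lateration_graph_on_delete_last[OF lat last] .
    have card_N: "card (neighbours G (Suc w)) = d + 1"
      using lateration_graph_on_neighbours_last[OF lat last] .
    have V': "fst G - {Suc w} = {1..w}"
      using V by (simp add: atLeastAtMostSuc_conv)
    show ?thesis
    proof (cases "neighbours G (Suc w) = fst G - {Suc w}")
      case True
      then have "w = d + 1"
        using card_N V' by simp
      then have "delete_vertex (Suc w) G = complete_graph (fst G - {Suc w})"
        using lateration_graph_on_eq_complete_graph[of d "delete_vertex (Suc w) G"] lat' V' by simp
      then have "G = complete_graph {1..Suc w}"
        using complete_graph_if_delete_vertex_complete[OF edges _ True] V by simp
      then show ?thesis
        by (simp add: obtainable_by_era.base)
    next
      case False
      have "neighbours G (Suc w) \<noteq> {}"
        using card_N by auto
      moreover have "finite (fst G)" "Suc w \<in> fst G"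
        using V by simp_all
      ultimately show ?thesis
        using obtainable_by_era_reattach_vertex[OF Suc.IH[OF lat'] _ edges _ _ False] by blast
    qed
  qed
qed

theorem proposition3:
  fixes d :: nat and G :: "nat graph"
  assumes "d \<ge> 1" and "lateration_graph d G"
  shows "obtainable_by_era G"
  using assms(2) by (auto simp: lateration_graph_iff intro: lateration_graph_on_obtainable_by_era)

end
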